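(* Let $\nu<0$ and define $\mathcal{R}_\nu:\mathbb{R}\to\mathbb{R}$ by $$\mathcal{R}_\nu(x):=\frac{(H_{\nu-1}(x))^2}{H_{\nu}(x)\,H_{\nu-2}(x)},\qquad x\in\mathbb{R},$$ where $H_\alpha$ denotes the Hermite function of index $\alpha$. Then $\mathcal{R}_\nu$ is strictly decreasing on $\mathbb{R}$.
   Context: For $\alpha<0$, the Hermite function $H_\alpha:\mathbb{R}\to\mathbb{R}$ is the solution of the ODE $u''(x)-2xu'(x)+2\alpha u(x)=0$ given by the integral representation $$H_\alpha(x)=\frac{1}{\Gamma(-\alpha)}\int_0^\infty t^{-\alpha-1}e^{-t^2-2xt}\,dt,\qquad x\in\mathbb{R},$$ where $\Gamma$ is Euler's Gamma function. In particular $H_\alpha(x)>0$ for all $x$ when $\alpha<0$, so $\mathcal{R}_\nu$ is well defined. *)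

theory Defs
  imports "HOL-Analysis.Analysis"
begin

text \<open>Hermite function of negative index alpha, via the integral representation
  H_alpha(x) = 1/Gamma(-alpha) * integral over (0,inf) of t^(-alpha-1) e^(-t^2-2xt) dt.\<close>
definition hermite_fun :: "real \<Rightarrow> real \<Rightarrow> real" where
  "hermite_fun \<alpha> x =
     (1 / Gamma (- \<alpha>)) *
     integral {0<..} (\<lambda>t. t powr (- \<alpha> - 1) * exp (- (t ^ 2) - 2 * x * t))"

definition R_ratio :: "real \<Rightarrow> real \<Rightarrow> real" where
  "R_ratio \<nu> x = (hermite_fun (\<nu> - 1) x) ^ 2 /
                  (hermite_fun \<nu> x * hermite_fun (\<nu> - 2) x)"

end

theory Submission
  imports Defs "HOL-Real_Asymp.Real_Asymp"
begin

text \<open>With p = -\<nu> - 1 and A_k(x) = \<integral>_0^\<infinity> t^(p+k) exp(-t^2 - 2xt) dt, the ratio R_\<nu> is a positive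
  constant (made of Gamma values) times A_1^2 / (A_0 A_2). Differentiating under the integral sign
  gives A_k' = -2 A_(k+1), so R_\<nu>' has the sign of -T with T = 2 A_0 A_2^2 - A_1^2 A_2 - A_0 A_1 A_3.
  Integrating by parts gives the recurrence (p + k + 1) A_k = 2 A_(k+2) + 2x A_(k+1). Modulo these
  recurrences, the positive quadratic form \<integral>_0^\<infinity> t^p exp(-t^2 - 2xt) (a + bt + ct^2)^2 dt at
  (a, b, c) = (-A_1 A_2, 2 A_0 A_2, -A_0 A_1) equals A_0 T (A_2 + (p + 1) A_0 / 2), whence T > 0.\<close>

definition hermite_kernel :: "real \<Rightarrow> real \<Rightarrow> real \<Rightarrow> real" where
  "hermite_kernel p x t = t powr p * exp (- (t ^ 2) - 2 * x * t)"

definition hermite_moment :: "real \<Rightarrow> real \<Rightarrow> real" where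
  "hermite_moment p x = integral {0<..} (hermite_kernel p x)"

lemma hermite_fun_eq_moment: "hermite_fun \<alpha> x = hermite_moment (- \<alpha> - 1) x / Gamma (- \<alpha>)"
  by (simp add: hermite_fun_def hermite_moment_def hermite_kernel_def[abs_def])

lemma hermite_kernel_nonneg: "hermite_kernel p x t \<ge> 0"
  by (simp add: hermite_kernel_def)

lemma hermite_kernel_pos: "t > 0 \<Longrightarrow> hermite_kernel p x t > 0"
  by (simp add: hermite_kernel_def)

lemma continuous_on_hermite_kernel: "continuous_on {0<..} (hermite_kernel p x)"
  unfolding hermite_kernel_def by (intro continuous_intros) auto

lemma borel_measurable_hermite_kernel: "hermite_kernel p x \<in> borel_measurable borel"
  unfolding hermite_kernel_def by measurable

lemma hermite_kernel_add_nat: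
  "t > 0 \<Longrightarrow> hermite_kernel (p + of_nat k) x t = hermite_kernel p x t * t ^ k"
  by (simp add: hermite_kernel_def powr_add powr_realpow)

lemma hermite_kernel_add_1: "t > 0 \<Longrightarrow> hermite_kernel (p + 1) x t = hermite_kernel p x t * t"
  using hermite_kernel_add_nat[of t p 1] by simp

lemma hermite_kernel_shift:
  "hermite_kernel p y t = hermite_kernel p x t * exp (- 2 * (y - x) * t)"
  by (simp add: hermite_kernel_def exp_add[symmetric] algebra_simps)

lemma hermite_kernel_le_Gamma_integrand:
  "hermite_kernel p x t \<le> exp ((1 - 2 * x)\<^sup>2 / 4) * (t powr p / exp t)"
proof -
  have "- (t ^ 2) - 2 * x * t \<le> (1 - 2 * x)\<^sup>2 / 4 + (- t)"
    using zero_le_power2[of "t - (1 - 2 * x) / 2"] by (simp add: power2_eq_square field_simps)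
  then have "exp (- (t ^ 2) - 2 * x * t) \<le> exp ((1 - 2 * x)\<^sup>2 / 4) * exp (- t)"
    by (simp add: exp_add[symmetric])
  then have "hermite_kernel p x t \<le> t powr p * (exp ((1 - 2 * x)\<^sup>2 / 4) * exp (- t))"
    unfolding hermite_kernel_def by (intro mult_left_mono) auto
  then show ?thesis
    by (simp add: exp_minus field_simps)
qed

lemma Gamma_integrand_integrable_on_pos:
  fixes p :: real
  assumes "p > -1"
  shows "(\<lambda>t. t powr p / exp t) integrable_on {0<..}"
proof -
  have "(\<lambda>t. t powr p / exp t) integrable_on {0..}"
    using Gamma_integral_real[of "p + 1"] assms by (auto simp: integrable_on_def)
  then show ?thesis
    by (rule integrable_spike_set) (auto intro: negligible_subset[OF negligible_sing[of 0]])
qed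

lemma hermite_kernel_absolutely_integrable:
  assumes "p > -1"
  shows "hermite_kernel p x absolutely_integrable_on {0<..}"
proof (rule measurable_bounded_by_integrable_imp_absolutely_integrable)
  show "hermite_kernel p x \<in> borel_measurable (lebesgue_on {0<..})"
    by (rule continuous_imp_measurable_on_sets_lebesgue[OF continuous_on_hermite_kernel]) auto
  show "(\<lambda>t. exp ((1 - 2 * x)\<^sup>2 / 4) * (t powr p / exp t)) integrable_on {0<..}"
    using Gamma_integrand_integrable_on_pos[OF assms] by (rule integrable_on_mult_right)
  show "norm (hermite_kernel p x t) \<le> exp ((1 - 2 * x)\<^sup>2 / 4) * (t powr p / exp t)" for t
    using hermite_kernel_le_Gamma_integrand[of p x t] hermite_kernel_nonneg[of p x t] by simp
qed auto

lemma hermite_kernel_has_integral: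
  "p > -1 \<Longrightarrow> (hermite_kernel p x has_integral hermite_moment p x) {0<..}"
  unfolding hermite_moment_def
  using hermite_kernel_absolutely_integrable set_lebesgue_integral_eq_integral(1) by blast

lemma integral_pos_if_pos_at:
  fixes f :: "real \<Rightarrow> real"
  assumes "open S" and int: "f integrable_on S" and cont: "continuous_on S f"
    and nonneg: "\<And>t. t \<in> S \<Longrightarrow> f t \<ge> 0" and "t0 \<in> S" and "f t0 > 0"
  shows "integral S f > 0"
proof -
  obtain e where "e > 0" and e: "\<And>t. t \<in> S \<Longrightarrow> dist t0 t < e \<Longrightarrow> f t \<noteq> 0"
    using continuous_on_avoid[OF cont \<open>t0 \<in> S\<close>, of 0] \<open>f t0 > 0\<close> by auto
  obtain r where "r > 0" and r: "ball t0 r \<subseteq> S"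
    using \<open>open S\<close> \<open>t0 \<in> S\<close> open_contains_ball by blast
  define d where "d = min e r / 2"
  have "d > 0" "d < e" "d < r"
    using \<open>e > 0\<close> \<open>r > 0\<close> by (auto simp: d_def)
  have near: "t \<in> S \<and> dist t0 t < e" if "t \<in> {t0 - d..t0 + d}" for t
  proof -
    have "dist t0 t \<le> d"
      using that by (simp add: dist_real_def abs_le_iff)
    then show ?thesis
      using r \<open>d < e\<close> \<open>d < r\<close> by auto
  qed
  then have I: "{t0 - d..t0 + d} \<subseteq> S"
    by blast
  have pos: "f t > 0" if "t \<in> {t0 - d..t0 + d}" for t
    using near[OF that] e[of t] nonneg[of t] by linarith
  have cont_I: "continuous_on {t0 - d..t0 + d} f"
    using continuous_on_subset[OF cont I] .
  have "0 < integral {t0 - d..t0 + d} f"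
    using integral_less_real[of "t0 - d" "t0 + d" "\<lambda>_. 0" f] \<open>d > 0\<close> pos cont_I by simp
  also have "\<dots> \<le> integral S f"
    using I pos int nonneg by (intro integral_subset_le integrable_continuous_interval cont_I) auto
  finally show ?thesis .
qed

lemma hermite_moment_pos: "p > -1 \<Longrightarrow> hermite_moment p x > 0"
  unfolding hermite_moment_def
  by (rule integral_pos_if_pos_at[of _ _ 1])
    (auto simp: hermite_kernel_nonneg hermite_kernel_pos continuous_on_hermite_kernel
      intro: has_integral_integrable[OF hermite_kernel_has_integral])

lemma hermite_moment_quadratic_form_pos:
  assumes p: "p > -1" and nontrivial: "a \<noteq> 0 \<or> b \<noteq> 0 \<or> c \<noteq> 0"
  shows "a\<^sup>2 * hermite_moment p x + 2 * a * b * hermite_moment (p + 1) x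
      + (b\<^sup>2 + 2 * a * c) * hermite_moment (p + 2) x + 2 * b * c * hermite_moment (p + 3) x
      + c\<^sup>2 * hermite_moment (p + 4) x > 0" (is "?S > 0")
proof -
  let ?K = "\<lambda>q. hermite_kernel q x"
  let ?g = "\<lambda>t. ?K p t * (a + b * t + c * t\<^sup>2)\<^sup>2"
  have "((\<lambda>t. a\<^sup>2 * ?K p t + 2 * a * b * ?K (p + 1) t + (b\<^sup>2 + 2 * a * c) * ?K (p + 2) t
      + 2 * b * c * ?K (p + 3) t + c\<^sup>2 * ?K (p + 4) t) has_integral ?S) {0<..}"
    using p by (intro has_integral_add has_integral_mult_right hermite_kernel_has_integral) auto
  moreover have "a\<^sup>2 * ?K p t + 2 * a * b * ?K (p + 1) t + (b\<^sup>2 + 2 * a * c) * ?K (p + 2) t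
      + 2 * b * c * ?K (p + 3) t + c\<^sup>2 * ?K (p + 4) t = ?g t" if "t \<in> {0<..}" for t
  proof -
    have "t > 0" using that by simp
    note shift = hermite_kernel_add_nat[OF this, of p _ x]
    show ?thesis
      unfolding hermite_kernel_add_1[OF \<open>t > 0\<close>] shift[of 2, unfolded of_nat_numeral]
        shift[of 3, unfolded of_nat_numeral] shift[of 4, unfolded of_nat_numeral]
      by (simp add: power2_eq_square power3_eq_cube power4_eq_xxxx algebra_simps)
  qed
  ultimately have g: "(?g has_integral ?S) {0<..}"
    by (rule has_integral_eq[rotated])
  \<comment> \<open>a nonzero polynomial of degree at most 2 cannot vanish at three points\<close>
  obtain t0 :: real where t0: "t0 \<in> {1, 2, 3}" "a + b * t0 + c * t0\<^sup>2 \<noteq> 0"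
  proof -
    have "\<not> (a + b * 1 + c * 1\<^sup>2 = 0 \<and> a + b * 2 + c * 2\<^sup>2 = 0 \<and> a + b * 3 + c * 3\<^sup>2 = 0)"
      using nontrivial by auto
    then show ?thesis using that by blast
  qed
  have "integral {0<..} ?g > 0"
  proof (rule integral_pos_if_pos_at)
    show "?g integrable_on {0<..}"
      using g by blast
    show "continuous_on {0<..} ?g"
      by (intro continuous_intros continuous_on_hermite_kernel)
    show "?g t0 > 0"
      using t0 hermite_kernel_pos[of t0 p x] by auto
  qed (use t0 in \<open>auto simp: hermite_kernel_nonneg\<close>)
  then show ?thesis
    using integral_unique[OF g] by simp
qed

lemma integral_eq_0_if_antiderivative_vanishes_at_ends:
  fixes f F :: "real \<Rightarrow> real"
  assumes f_int: "f absolutely_integrable_on {0<..}" and f_meas: "f \<in> borel_measurable borel"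
    and cont: "continuous_on {0<..} f" and deriv: "\<And>t. t > 0 \<Longrightarrow> (F has_real_derivative f t) (at t)"
    and lim_0: "(F \<longlongrightarrow> 0) (at_right 0)" and lim_top: "(F \<longlongrightarrow> 0) at_top"
  shows "integral {0<..} f = 0"
proof -
  have int: "set_integrable lborel (einterval 0 \<infinity>) f"
    using f_int f_meas unfolding set_integrable_def
    by (subst integrable_completion[symmetric]) (auto simp: zero_ereal_def)
  have "(LBINT t=0..\<infinity>. f t) = 0 - 0"
  proof (rule interval_integral_FTC_integrable[where F = F])
    fix t assume "0 < ereal t" "ereal t < \<infinity>"
    then have "t > 0"
      by (simp add: zero_ereal_def)
    then show "isCont f t"
      using cont continuous_on_eq_continuous_at[of "{0<..}" f] by auto
    show "(F has_vector_derivative f t) (at t)"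
      using deriv[OF \<open>t > 0\<close>] by (simp add: has_real_derivative_iff_has_vector_derivative)
  next
    show "((F \<circ> real_of_ereal) \<longlongrightarrow> 0) (at_right 0)"
      unfolding zero_ereal_def ereal_tendsto_simps1 by (rule lim_0)
    show "((F \<circ> real_of_ereal) \<longlongrightarrow> 0) (at_left \<infinity>)"
      unfolding ereal_tendsto_simps1 by (rule lim_top)
  qed (use int in auto)
  moreover have "(LBINT t=0..\<infinity>. f t) = integral {0<..} f"
    using int set_borel_integral_eq_integral(2)[of "{0<..}" f]
    by (simp add: interval_integral_to_infinity_eq zero_ereal_def)
  ultimately show ?thesis
    by simp
qed

lemma hermite_kernel_has_derivative:
  assumes "t > 0"
  shows "(hermite_kernel (p + 1) x has_real_derivative
    (p + 1) * hermite_kernel p x t - 2 * hermite_kernel (p + 2) x t - 2 * x * hermite_kernel (p + 1) x t) (at t)"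
proof -
  have "(hermite_kernel (p + 1) x has_real_derivative
      (p + 1) * t powr p * exp (- (t ^ 2) - 2 * x * t)
      + t powr (p + 1) * (exp (- (t ^ 2) - 2 * x * t) * (- (2 * t) - 2 * x))) (at t)"
    unfolding hermite_kernel_def[abs_def] using assms
    by (auto intro!: derivative_eq_intros simp: power2_eq_square algebra_simps)
  moreover have "(p + 1) * t powr p * exp (- (t ^ 2) - 2 * x * t)
      + t powr (p + 1) * (exp (- (t ^ 2) - 2 * x * t) * (- (2 * t) - 2 * x))
    = (p + 1) * hermite_kernel p x t - 2 * hermite_kernel (p + 2) x t - 2 * x * hermite_kernel (p + 1) x t"
    using hermite_kernel_add_nat[OF assms, of p _ x] assms
    by (simp add: hermite_kernel_def powr_add power2_eq_square algebra_simps)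
  ultimately show ?thesis
    by simp
qed

lemma hermite_moment_recurrence:
  assumes p: "p > -1"
  shows "(p + 1) * hermite_moment p x = 2 * hermite_moment (p + 2) x + 2 * x * hermite_moment (p + 1) x"
proof -
  let ?K = "\<lambda>q. hermite_kernel q x"
  define f where "f t = (p + 1) * ?K p t - 2 * ?K (p + 2) t - 2 * x * ?K (p + 1) t" for t
  have f_int: "(f has_integral (p + 1) * hermite_moment p x - 2 * hermite_moment (p + 2) x
      - 2 * x * hermite_moment (p + 1) x) {0<..}"
    unfolding f_def using p by (intro has_integral_diff has_integral_mult_right hermite_kernel_has_integral) auto
  have "integral {0<..} f = 0"
  proof (rule integral_eq_0_if_antiderivative_vanishes_at_ends)
    show "f absolutely_integrable_on {0<..}"
      unfolding f_def using p
      by (intro set_integral_diff(1) set_integrable_mult_right hermite_kernel_absolutely_integrable) auto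
    show "f \<in> borel_measurable borel"
      unfolding f_def using borel_measurable_hermite_kernel by measurable
    show "continuous_on {0<..} f"
      unfolding f_def by (intro continuous_intros continuous_on_hermite_kernel)
    show "(?K (p + 1) has_real_derivative f t) (at t)" if "t > 0" for t
      unfolding f_def using hermite_kernel_has_derivative[OF that] .
    show "(?K (p + 1) \<longlongrightarrow> 0) (at_right 0)"
      unfolding hermite_kernel_def using p by real_asymp
    show "(?K (p + 1) \<longlongrightarrow> 0) at_top"
      unfolding hermite_kernel_def by real_asymp
  qed
  with integral_unique[OF f_int] show ?thesis
    by simp
qed

lemma abs_exp_minus_one_le: "\<bar>exp u - 1\<bar> \<le> \<bar>u\<bar> * exp \<bar>u\<bar>" for u :: real
proof (cases "u \<ge> 0")
  case True
  have "(1 - u) * exp u \<le> exp (- u) * exp u"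
    using exp_ge_add_one_self[of "- u"] by (intro mult_right_mono) auto
  then show ?thesis
    using True by (simp add: exp_minus field_simps)
next
  case False
  then have abs_eq: "\<bar>exp u - 1\<bar> = 1 - exp u" "\<bar>u\<bar> = - u"
    by auto
  have "1 + u \<le> exp u" "- u \<le> - u * exp (- u)"
    using False exp_ge_add_one_self[of u] by auto
  then show ?thesis
    unfolding abs_eq by linarith
qed

lemma hermite_kernel_has_derivative_param:
  assumes "t > 0"
  shows "((\<lambda>y. hermite_kernel p y t) has_real_derivative - 2 * hermite_kernel (p + 1) x t) (at x)"
  unfolding hermite_kernel_add_1[OF assms] unfolding hermite_kernel_def
  by (auto intro!: derivative_eq_intros simp: algebra_simps)

lemma hermite_kernel_diff_quotient_bound:
  assumes t: "t > 0" and "y \<noteq> x" and "\<bar>y - x\<bar> \<le> B"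
  shows "\<bar>(hermite_kernel p y t - hermite_kernel p x t) / (y - x)\<bar> \<le> 2 * hermite_kernel (p + 1) (x - B) t"
proof -
  define d where "d = y - x"
  have "d \<noteq> 0" "\<bar>d\<bar> \<le> B"
    using assms by (auto simp: d_def)
  have "(hermite_kernel p y t - hermite_kernel p x t) / (y - x) = hermite_kernel p x t * (exp (- 2 * d * t) - 1) / d"
    unfolding hermite_kernel_shift[of p y t x] d_def by (simp add: algebra_simps)
  then have "\<bar>(hermite_kernel p y t - hermite_kernel p x t) / (y - x)\<bar>
      = hermite_kernel p x t * \<bar>exp (- 2 * d * t) - 1\<bar> / \<bar>d\<bar>"
    by (simp add: abs_mult hermite_kernel_nonneg)
  also have "\<dots> \<le> hermite_kernel p x t * (2 * \<bar>d\<bar> * t * exp (2 * \<bar>d\<bar> * t)) / \<bar>d\<bar>"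
    using abs_exp_minus_one_le[of "- 2 * d * t"] t
    by (intro divide_right_mono mult_left_mono hermite_kernel_nonneg) (simp_all add: abs_mult)
  also have "\<dots> = 2 * t * hermite_kernel p x t * exp (2 * \<bar>d\<bar> * t)"
    using \<open>d \<noteq> 0\<close> by simp
  also have "\<dots> \<le> 2 * t * hermite_kernel p x t * exp (2 * B * t)"
    using \<open>\<bar>d\<bar> \<le> B\<close> t hermite_kernel_nonneg[of p x t] by (intro mult_left_mono) auto
  also have "\<dots> = 2 * hermite_kernel (p + 1) (x - B) t"
    unfolding hermite_kernel_add_1[OF t] hermite_kernel_shift[of p "x - B" t x]
    by (simp add: algebra_simps)
  finally show ?thesis .
qed

lemma hermite_moment_has_derivative:
  assumes p: "p > -1"
  shows "(hermite_moment p has_real_derivative - 2 * hermite_moment (p + 1) x) (at x)"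
  unfolding has_field_derivative_iff
proof (subst LIMSEQ_SEQ_conv[symmetric], intro allI impI)
  fix X :: "nat \<Rightarrow> real"
  assume "(\<forall>i. X i \<noteq> x) \<and> X \<longlonglongrightarrow> x"
  then have X_ne: "\<And>i. X i \<noteq> x" and X_lim: "X \<longlonglongrightarrow> x"
    by auto
  obtain K where "\<And>i. norm (X i) \<le> K"
    using convergent_imp_Bseq[OF convergentI[OF X_lim]] unfolding Bseq_def by blast
  then obtain B where B: "\<And>i. \<bar>X i - x\<bar> \<le> B"
    by (metis abs_triangle_ineq4 add_mono order_refl order_trans real_norm_def)
  define q where "q i t = (hermite_kernel p (X i) t - hermite_kernel p x t) / (X i - x)" for i t
  have q_int: "(q i has_integral (hermite_moment p (X i) - hermite_moment p x) / (X i - x)) {0<..}" for i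
    unfolding q_def using p by (intro has_integral_divide has_integral_diff hermite_kernel_has_integral)
  have "(\<lambda>i. integral {0<..} (q i)) \<longlonglongrightarrow> integral {0<..} (\<lambda>t. - 2 * hermite_kernel (p + 1) x t)"
  proof (rule dominated_convergence(2))
    show "q i integrable_on {0<..}" for i
      using q_int by blast
    show "(\<lambda>t. 2 * hermite_kernel (p + 1) (x - B) t) integrable_on {0<..}"
      using p by (intro integrable_on_mult_right has_integral_integrable[OF hermite_kernel_has_integral]) auto
    show "norm (q i t) \<le> 2 * hermite_kernel (p + 1) (x - B) t" if "t \<in> {0<..}" for i t
      unfolding q_def real_norm_def using that X_ne B by (intro hermite_kernel_diff_quotient_bound) auto
    show "(\<lambda>i. q i t) \<longlonglongrightarrow> - 2 * hermite_kernel (p + 1) x t" if "t \<in> {0<..}" for t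
      using hermite_kernel_has_derivative_param[of t p x] that X_ne X_lim
      unfolding q_def has_field_derivative_iff LIMSEQ_SEQ_conv[symmetric] by auto
  qed
  moreover have "integral {0<..} (\<lambda>t. - 2 * hermite_kernel (p + 1) x t) = - 2 * hermite_moment (p + 1) x"
    by (simp add: hermite_moment_def)
  ultimately show "(\<lambda>i. (hermite_moment p (X i) - hermite_moment p x) / (X i - x))
      \<longlonglongrightarrow> - 2 * hermite_moment (p + 1) x"
    using integral_unique[OF q_int] by simp
qed

lemma turan_quadratic_form_identity:
  fixes a x A0 A1 A2 A3 A4 :: real
  assumes "a > 0" and "a * A0 = 2 * A2 + 2 * x * A1"
    and "(a + 1) * A1 = 2 * A3 + 2 * x * A2" and "(a + 2) * A2 = 2 * A4 + 2 * x * A3"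
  shows "(- A1 * A2)\<^sup>2 * A0 + 2 * (- A1 * A2) * (2 * A0 * A2) * A1
      + ((2 * A0 * A2)\<^sup>2 + 2 * (- A1 * A2) * (- A0 * A1)) * A2
      + 2 * (2 * A0 * A2) * (- A0 * A1) * A3 + (- A0 * A1)\<^sup>2 * A4
    = A0 * (2 * A0 * A2\<^sup>2 - A1\<^sup>2 * A2 - A0 * A1 * A3) * (A2 + a * A0 / 2)"
proof -
  have A0: "A0 = (2 * A2 + 2 * x * A1) / a"
    using assms(1,2) by (simp add: field_simps)
  have A3: "A3 = ((a + 1) * A1 - 2 * x * A2) / 2" and A4: "A4 = ((a + 2) * A2 - 2 * x * A3) / 2"
    using assms(3,4) by simp_all
  show ?thesis
    unfolding A4 unfolding A3 unfolding A0 using \<open>a > 0\<close> by (simp add: field_simps power2_eq_square)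
qed

lemma hermite_moment_turan_pos:
  assumes p: "p > -1"
  shows "2 * hermite_moment p x * (hermite_moment (p + 2) x)\<^sup>2
    - (hermite_moment (p + 1) x)\<^sup>2 * hermite_moment (p + 2) x
    - hermite_moment p x * hermite_moment (p + 1) x * hermite_moment (p + 3) x > 0"
proof -
  define A0 A1 A2 A3 A4 where "A0 = hermite_moment p x" and "A1 = hermite_moment (p + 1) x"
    and "A2 = hermite_moment (p + 2) x" and "A3 = hermite_moment (p + 3) x"
    and "A4 = hermite_moment (p + 4) x"
  note A_defs = A0_def A1_def A2_def A3_def A4_def
  have pos: "A0 > 0" "A1 > 0" "A2 > 0"
    using p by (simp_all add: A_defs hermite_moment_pos)
  then have "- A1 * A2 \<noteq> 0 \<or> 2 * A0 * A2 \<noteq> 0 \<or> - A0 * A1 \<noteq> 0"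
    by simp
  note form_pos = hermite_moment_quadratic_form_pos[OF p this, of x, folded A_defs]
  have "(p + 1) * A0 = 2 * A2 + 2 * x * A1" "(p + 1 + 1) * A1 = 2 * A3 + 2 * x * A2"
    "(p + 1 + 2) * A2 = 2 * A4 + 2 * x * A3"
    using hermite_moment_recurrence[of p x] hermite_moment_recurrence[of "p + 1" x]
      hermite_moment_recurrence[of "p + 2" x] p
    unfolding A_defs by (simp_all add: add.assoc)
  with p have "A0 * (2 * A0 * A2\<^sup>2 - A1\<^sup>2 * A2 - A0 * A1 * A3) * (A2 + (p + 1) * A0 / 2) > 0"
    using form_pos by (subst (asm) turan_quadratic_form_identity[where a = "p + 1" and x = x]) simp_all
  then have "(2 * A0 * A2\<^sup>2 - A1\<^sup>2 * A2 - A0 * A1 * A3) * (A0 * (A2 + (p + 1) * A0 / 2)) > 0"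
    by (simp add: mult_ac)
  moreover have "A0 * (A2 + (p + 1) * A0 / 2) > 0"
    using p pos by (simp add: add_pos_pos)
  ultimately show ?thesis
    unfolding A_defs[symmetric] by (simp add: zero_less_mult_iff)
qed

lemma hermite_moment_ratio_has_derivative_neg:
  assumes p: "p > -1"
  shows "\<exists>D. ((\<lambda>y. (hermite_moment (p + 1) y)\<^sup>2 / (hermite_moment p y * hermite_moment (p + 2) y))
    has_real_derivative D) (at x) \<and> D < 0"
proof (intro exI conjI)
  define A0 A1 A2 A3 where "A0 = hermite_moment p x" and "A1 = hermite_moment (p + 1) x"
    and "A2 = hermite_moment (p + 2) x" and "A3 = hermite_moment (p + 3) x"
  note A_defs = A0_def A1_def A2_def A3_def
  have pos: "A0 > 0" "A1 > 0" "A2 > 0"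
    using p by (simp_all add: A_defs hermite_moment_pos)
  have "(hermite_moment p has_real_derivative - 2 * A1) (at x)"
    "(hermite_moment (p + 1) has_real_derivative - 2 * A2) (at x)"
    "(hermite_moment (p + 2) has_real_derivative - 2 * A3) (at x)"
    using p hermite_moment_has_derivative[of p x] hermite_moment_has_derivative[of "p + 1" x]
      hermite_moment_has_derivative[of "p + 2" x]
    by (simp_all add: A_defs add.assoc)
  from DERIV_divide[OF DERIV_power[OF this(2), of 2] DERIV_mult[OF this(1,3)]] pos
  show "((\<lambda>y. (hermite_moment (p + 1) y)\<^sup>2 / (hermite_moment p y * hermite_moment (p + 2) y))
      has_real_derivative (2 * (- 2 * A2 * A1) * (A0 * A2) - A1\<^sup>2 * (- 2 * A1 * A2 + - 2 * A3 * A0))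
        / (A0 * A2 * (A0 * A2))) (at x)"
    unfolding A_defs by simp
  have "2 * (- 2 * A2 * A1) * (A0 * A2) - A1\<^sup>2 * (- 2 * A1 * A2 + - 2 * A3 * A0)
      = - 2 * A1 * (2 * A0 * A2\<^sup>2 - A1\<^sup>2 * A2 - A0 * A1 * A3)"
    by (simp add: algebra_simps power2_eq_square)
  moreover have "2 * A0 * A2\<^sup>2 - A1\<^sup>2 * A2 - A0 * A1 * A3 > 0"
    using hermite_moment_turan_pos[OF p, of x] unfolding A_defs .
  ultimately show "(2 * (- 2 * A2 * A1) * (A0 * A2) - A1\<^sup>2 * (- 2 * A1 * A2 + - 2 * A3 * A0))
      / (A0 * A2 * (A0 * A2)) < 0"
    using pos by (simp add: divide_neg_pos mult_pos_neg)
qed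

lemma hermite_moment_ratio_strict_antimono:
  assumes "p > -1"
  shows "strict_antimono_on UNIV
    (\<lambda>y. (hermite_moment (p + 1) y)\<^sup>2 / (hermite_moment p y * hermite_moment (p + 2) y))"
proof (rule monotone_onI)
  fix r s :: real
  assume "r < s"
  then show "(hermite_moment (p + 1) s)\<^sup>2 / (hermite_moment p s * hermite_moment (p + 2) s)
      < (hermite_moment (p + 1) r)\<^sup>2 / (hermite_moment p r * hermite_moment (p + 2) r)"
    by (rule DERIV_neg_imp_decreasing) (rule hermite_moment_ratio_has_derivative_neg[OF assms])
qed

lemma R_ratio_eq_moment_ratio:
  assumes "p > -1"
  shows "R_ratio (- p - 1) y = Gamma (p + 1) * Gamma (p + 3) / (Gamma (p + 2))\<^sup>2
    * ((hermite_moment (p + 1) y)\<^sup>2 / (hermite_moment p y * hermite_moment (p + 2) y))"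
proof -
  have "hermite_fun (- p - 1 - 1) y = hermite_moment (p + 1) y / Gamma (p + 2)"
    "hermite_fun (- p - 1) y = hermite_moment p y / Gamma (p + 1)"
    "hermite_fun (- p - 1 - 2) y = hermite_moment (p + 2) y / Gamma (p + 3)"
    unfolding hermite_fun_eq_moment by (simp_all add: algebra_simps)
  then have "R_ratio (- p - 1) y = (hermite_moment (p + 1) y / Gamma (p + 2))\<^sup>2
      / (hermite_moment p y / Gamma (p + 1) * (hermite_moment (p + 2) y / Gamma (p + 3)))"
    unfolding R_ratio_def by simp
  also have "\<dots> = Gamma (p + 1) * Gamma (p + 3) / (Gamma (p + 2))\<^sup>2
      * ((hermite_moment (p + 1) y)\<^sup>2 / (hermite_moment p y * hermite_moment (p + 2) y))"
    using assms by (simp add: field_simps power2_eq_square)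
  finally show ?thesis .
qed

theorem theorem3p1:
  fixes \<nu> :: real
  assumes "\<nu> < 0"
  shows "strict_antimono_on UNIV (R_ratio \<nu>)"
proof -
  define p where "p = - \<nu> - 1"
  have "p > -1" and \<nu>: "\<nu> = - p - 1"
    using assms by (simp_all add: p_def)
  have "Gamma (p + 1) * Gamma (p + 3) / (Gamma (p + 2))\<^sup>2 > 0"
    using \<open>p > -1\<close> by (intro divide_pos_pos mult_pos_pos zero_less_power Gamma_real_pos) auto
  with hermite_moment_ratio_strict_antimono[OF \<open>p > -1\<close>] show ?thesis
    unfolding \<nu> monotone_on_def R_ratio_eq_moment_ratio[OF \<open>p > -1\<close>]
    by (blast intro: mult_strict_left_mono)
qed

end
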